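(* Let $p$ be a prime, $k\geq 1$, $j\geq 0$ integers, and $r$ an integer with $1\leq r\leq p-1$. If $d_k(pn+r)\equiv 0\pmod p$ for all $n\geq 0$, then $d_{pj+k}(pn+r)\equiv 0\pmod p$ for all $n\geq 0$.
   Context: For each integer $k\geq 1$, the numbers $d_k(n)$ are defined by $\sum_{n\geq 0} d_k(n)q^n = \frac{f_2^k}{f_1^{3k+1}}$, where $f_r = \prod_{i\geq 1}(1-q^{ri})$. *)

theory Defs
  imports "HOL-Computational_Algebra.Formal_Power_Series"
begin

text \<open>f_r = prod_{i>=1} (1 - q^(r i)) as an integer formal power series.
  The n-th coefficient of the infinite product equals the n-th coefficient of
  the finite partial product over i = 1..n (later factors are 1 mod q^(n+1)) when r >= 1.\<close>
definition f_euler :: "nat \<Rightarrow> int fps" where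
  "f_euler r = Abs_fps (\<lambda>n. fps_nth (\<Prod>i\<in>{1..n}. (1 - fps_X ^ (r * i))) n)"

definition f1_inv :: "int fps" where
  "f1_inv = fps_right_inverse (f_euler 1) 1"

definition d :: "nat \<Rightarrow> nat \<Rightarrow> int" where
  "d k n = fps_nth (f_euler 2 ^ k * f1_inv ^ (3 * k + 1)) n"

end

theory Submission
  imports Defs "HOL-Computational_Algebra.Primes"
begin

unbundle fps_syntax

text \<open>For an integer power series \<open>A\<close> and a prime \<open>p\<close>, Frobenius gives
  \<open>A(q)\<^sup>p \<equiv> A(q\<^sup>p) (mod p)\<close>, so the coefficients of \<open>A\<^sup>p\<close> at exponents prime to \<open>p\<close>
  vanish modulo \<open>p\<close>. The generating function of \<open>d\<^bsub>pj+k\<^esub>\<close> is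
  \<open>((f\<^sub>2 / f\<^sub>1\<^sup>3)\<^sup>j)\<^sup>p\<close> times that of \<open>d\<^sub>k\<close>. In the coefficient of \<open>q\<^bsup>pn+r\<^esup>\<close> of this
  product, each term pairs a coefficient of the first factor at an exponent prime to \<open>p\<close>
  or a coefficient \<open>d\<^sub>k(pm + r)\<close>; both are divisible by \<open>p\<close>.\<close>

definition p_lacunary :: "nat \<Rightarrow> int fps \<Rightarrow> bool" where
  "p_lacunary p A \<longleftrightarrow> (\<forall>n. \<not> p dvd n \<longrightarrow> int p dvd A $ n)"

lemma p_lacunary_mult_nth_progression:
  assumes "p_lacunary p A" and "r < p" and "\<forall>m. int p dvd B $ (p * m + r)"
  shows "int p dvd (A * B) $ (p * n + r)"
  unfolding fps_mult_nth
proof (rule dvd_sum)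
  fix i assume i: "i \<in> {0..p * n + r}"
  show "int p dvd A $ i * B $ (p * n + r - i)"
  proof (cases "p dvd i")
    case True
    then obtain m where m: "i = p * m" ..
    with i \<open>r < p\<close> have "p * m < p * Suc n" by simp
    then have "m \<le> n" by (simp only: mult_less_cancel1 less_Suc_eq_le)
    then have "p * n + r - i = p * (n - m) + r"
      using m by (simp add: diff_mult_distrib2)
    with assms(3) show ?thesis by simp
  next
    case False
    with assms(1) show ?thesis by (simp add: p_lacunary_def)
  qed
qed

lemma p_lacunary_power_add:
  assumes "prime p" and "p_lacunary p (A ^ p)" and "p_lacunary p (B ^ p)"
  shows "p_lacunary p ((A + B) ^ p)"
proof -
  define M where "M = (\<Sum>k\<in>{0<..<p}. of_nat (p choose k) * A ^ k * B ^ (p - k))"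
  have "p > 0" using assms(1) prime_gt_0_nat by blast
  then have "{..p} = insert 0 (insert p {0<..<p})" by auto
  then have "(A + B) ^ p = A ^ p + B ^ p + M"
    using \<open>p > 0\<close> by (simp add: binomial_ring M_def algebra_simps)
  moreover have "int p dvd M $ n" for n
    unfolding M_def fps_sum_nth
  proof (rule dvd_sum)
    fix k assume "k \<in> {0<..<p}"
    then have "int p dvd int (p choose k)"
      using dvd_choose_prime[OF _ _ _ assms(1)] by (simp flip: of_nat_dvd_iff)
    then show "int p dvd (of_nat (p choose k) * A ^ k * B ^ (p - k)) $ n"
      by (simp add: fps_of_nat mult.assoc)
  qed
  ultimately show ?thesis
    using assms(2,3) by (simp add: p_lacunary_def)
qed

lemma p_lacunary_monom_power: "p > 0 \<Longrightarrow> p_lacunary p ((fps_const c * fps_X ^ N) ^ p)"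
  by (auto simp: p_lacunary_def power_mult_distrib power_mult[symmetric])

lemma fps_cutoff_power_nth: "k < N \<Longrightarrow> (fps_cutoff N A ^ m) $ k = (A ^ m) $ k"
proof (induction m arbitrary: k)
  case (Suc m)
  then show ?case
    by (simp add: fps_mult_nth)
qed simp

lemma fps_cutoff_Suc: "fps_cutoff (Suc N) A = fps_cutoff N A + fps_const (A $ N) * fps_X ^ N"
  by (auto simp: fps_eq_iff less_Suc_eq)

lemma p_lacunary_power_prime:
  assumes "prime p"
  shows "p_lacunary p (A ^ p)"
proof -
  have "p_lacunary p (fps_cutoff N A ^ p)" for N
  proof (induction N)
    case 0
    show ?case using prime_gt_0_nat[OF assms] by (simp add: p_lacunary_def zero_power)
  next
    case (Suc N)
    then show ?case
      unfolding fps_cutoff_Suc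
      using assms prime_gt_0_nat[OF assms] by (intro p_lacunary_power_add p_lacunary_monom_power)
  qed
  then show ?thesis
    by (metis fps_cutoff_power_nth lessI p_lacunary_def)
qed

theorem theorem4p4:
  fixes p k j r :: nat
  assumes "prime p" and "k \<ge> 1" and "1 \<le> r" and "r \<le> p - 1"
    and "\<forall>n. int p dvd d k (p * n + r)"
  shows "\<forall>n. int p dvd d (p * j + k) (p * n + r)"
proof
  fix n
  define D where "D = f_euler 2 ^ k * f1_inv ^ (3 * k + 1)"
  have "r < p" using assms(4) prime_gt_0_nat[OF assms(1)] by linarith
  have "f_euler 2 ^ (p * j + k) * f1_inv ^ (3 * (p * j + k) + 1)
      = ((f_euler 2 * f1_inv ^ 3) ^ j) ^ p * D"
    by (simp add: D_def power_add power_mult_distrib algebra_simps flip: power_mult)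
  then have "d (p * j + k) (p * n + r) = (((f_euler 2 * f1_inv ^ 3) ^ j) ^ p * D) $ (p * n + r)"
    by (simp add: d_def)
  also have "int p dvd \<dots>"
    using p_lacunary_power_prime[OF assms(1)] \<open>r < p\<close> assms(5)
    by (intro p_lacunary_mult_nth_progression) (simp_all add: D_def d_def)
  finally show "int p dvd d (p * j + k) (p * n + r)" .
qed

end
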